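(* The linear map $\varphi$ maps $\Sigma(B_n)$ into $\Sigma(A_{n-1})$ and, for every $J\subseteq\{0,1,\dots,n-1\}$, $$\varphi(Y_J)=\sum_{F\in\mathcal{F}_n,\ F\subseteq J\,\triangle\,(J+1)}2^{\#F}\,P_F.$$
   Context: $B_n$: signed permutations $w=w_1\dots w_n$, values ordered $\cdots<-2<-1<1<2<\cdots$, $w_0=0$; $\mathrm{Des}(w)=\{i\in\{0,\dots,n-1\}:w_i>w_{i+1}\}$; $Y_J=\sum_{\mathrm{Des}(w)=J}w\in\mathbb{Q}B_n$; $\Sigma(B_n)=\mathrm{span}\{Y_J\}$. $\Sigma(A_{n-1})\subseteq\mathbb{Q}\mathfrak{S}_n$ is the span of $\sum_{\mathrm{Des}(u)=J}u$, $J\subseteq[n-1]$, where $\mathrm{Des}(u)=\{i\in[n-1]:u_i>u_{i+1}\}$. $\varphi:\mathbb{Q}B_n\to\mathbb{Q}\mathfrak{S}_n$ is the linear extension of $w\mapsto|w_1|\dots|w_n|$. For $u\in\mathfrak{S}_n$, $\mathrm{Peak}(u)=\{i\in[n-1]:u_{i-1}<u_i>u_{i+1}\}$ with $u_0=0$; $\mathcal{F}_n$ is the set of subsets of $[n-1]$ with no two consecutive integers; $P_F=\sum_{\mathrm{Peak}(u)=F}u$. $J+1=\{j+1:j\in J\}$ and $\triangle$ is symmetric difference. *)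

theory Defs
  imports Complex_Main
begin

text \<open>Signed permutations w = w_1 ... w_n are represented as int lists of length n
  (w_i = w ! (i-1)); ordinary permutations u of [n] as int lists with values in {1..n}.
  Elements of the group algebras Q B_n and Q S_n are functions from such lists to rat
  (coefficient of each group element).\<close>

definition Bn :: "nat \<Rightarrow> int list set" where
  "Bn n = {w. length w = n \<and> distinct (map abs w) \<and> set (map abs w) = {1..int n}}"

definition Sn :: "nat \<Rightarrow> int list set" where
  "Sn n = {u. length u = n \<and> distinct u \<and> set u = {1..int n}}"

definition pos :: "int list \<Rightarrow> nat \<Rightarrow> int" where
  "pos w i = (if i = 0 then 0 else w ! (i - 1))"

definition DesB :: "int list \<Rightarrow> nat set" where
  "DesB w = {i. i < length w \<and> pos w i > pos w (Suc i)}"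

definition DesA :: "int list \<Rightarrow> nat set" where
  "DesA u = {i. 1 \<le> i \<and> i < length u \<and> pos u i > pos u (Suc i)}"

definition Peak :: "int list \<Rightarrow> nat set" where
  "Peak u = {i. 1 \<le> i \<and> i < length u \<and> pos u (i - 1) < pos u i \<and> pos u i > pos u (Suc i)}"

definition YB :: "nat \<Rightarrow> nat set \<Rightarrow> int list \<Rightarrow> rat" where
  "YB n J = (\<lambda>w. if w \<in> Bn n \<and> DesB w = J then 1 else 0)"

definition YA :: "nat \<Rightarrow> nat set \<Rightarrow> int list \<Rightarrow> rat" where
  "YA n J = (\<lambda>u. if u \<in> Sn n \<and> DesA u = J then 1 else 0)"

text \<open>Sigma(B_n): the Q-span of the Y_J, J \<subseteq> {0..n-1} (finite family, so
  the span is the set of all linear combinations).\<close>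
definition SigmaB :: "nat \<Rightarrow> (int list \<Rightarrow> rat) set" where
  "SigmaB n = {f. \<exists>c :: nat set \<Rightarrow> rat. f = (\<lambda>w. \<Sum>J\<in>Pow {0..<n}. c J * YB n J w)}"

definition SigmaA :: "nat \<Rightarrow> (int list \<Rightarrow> rat) set" where
  "SigmaA n = {f. \<exists>c :: nat set \<Rightarrow> rat. f = (\<lambda>u. \<Sum>J\<in>Pow {1..<n}. c J * YA n J u)}"

text \<open>The linear extension of w \<mapsto> |w_1| ... |w_n| from Q B_n to Q S_n.\<close>
definition phi :: "nat \<Rightarrow> (int list \<Rightarrow> rat) \<Rightarrow> (int list \<Rightarrow> rat)" where
  "phi n f = (\<lambda>u. \<Sum>w\<in>{w \<in> Bn n. map abs w = u}. f w)"

definition Fn :: "nat \<Rightarrow> nat set set" where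
  "Fn n = {F. F \<subseteq> {1..<n} \<and> (\<forall>i\<in>F. Suc i \<notin> F)}"

definition PF :: "nat \<Rightarrow> nat set \<Rightarrow> int list \<Rightarrow> rat" where
  "PF n F = (\<lambda>u. if u \<in> Sn n \<and> Peak u = F then 1 else 0)"

end

theory Submission
  imports Defs
begin

text \<open>Write a signed permutation as w = (e_1 u_1, ..., e_n u_n) with u = phi(w) and
  signs e_i. Whether i - 1 is a descent of w is decided by the sign of the larger of
  u_(i-1) and u_i (with u_0 = 0). The sign at a peak of u decides both neighbouring
  gaps, in opposite directions, so exactly one of i - 1, i is a descent; all other
  constraints are independent, and the signs not decided by any gap, one for each peak,
  are free. Hence the number of w over u with descent set J is 2 ^ #Peak(u) if
  Peak(u) is contained in J symmetric-difference (J + 1), and 0 otherwise. As this depends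
  on u only through Peak(u), hence through Des(u), phi maps Sigma(B_n) into Sigma(A_(n-1)).
  The count is computed by induction on u, appending one letter at a time and keeping
  track of the sign of the last letter.\<close>

definition signings :: "int list \<Rightarrow> int list set" where
  "signings v = {w. map abs w = v}"

definition last_negative :: "int list \<Rightarrow> bool" where
  "last_negative w \<longleftrightarrow> pos w (length w) < 0"

definition signed :: "bool \<Rightarrow> int \<Rightarrow> int" where
  "signed b a = (if b then - a else a)"

definition des_count :: "int list \<Rightarrow> nat set \<Rightarrow> bool \<Rightarrow> rat" where
  "des_count v J b = (\<Sum>w\<in>signings v. if DesB w = J \<and> last_negative w = b then 1 else 0)"

definition ends_in_descent :: "int list \<Rightarrow> bool" where
  "ends_in_descent v \<longleftrightarrow> pos v (length v - 1) > pos v (length v)"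

definition shift_symdiff :: "nat set \<Rightarrow> nat set" where
  "shift_symdiff J = (J \<union> Suc ` J) - (J \<inter> Suc ` J)"

definition peak_compatible :: "int list \<Rightarrow> nat set \<Rightarrow> bool" where
  "peak_compatible v J \<longleftrightarrow> J \<subseteq> {..<length v} \<and> Peak v \<subseteq> shift_symdiff J"

lemma mem_shift_symdiff: "0 < i \<Longrightarrow> i \<in> shift_symdiff J \<longleftrightarrow> (i \<in> J) \<noteq> (i - 1 \<in> J)"
  by (cases i) (auto simp: shift_symdiff_def)

lemma pos_snoc: "i \<le> length w \<Longrightarrow> pos (w @ [y]) i = pos w i"
  by (auto simp: pos_def nth_append)

lemma pos_snoc_last: "pos (w @ [y]) (Suc (length w)) = y"
  by (simp add: pos_def)

lemma pos_length: "pos v (length v) = (if v = [] then 0 else last v)"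
  by (simp add: pos_def last_conv_nth)

lemma DesB_subset: "DesB w \<subseteq> {..<length w}"
  by (auto simp: DesB_def)

lemma Peak_subset: "Peak w \<subseteq> {1..<length w}"
  by (auto simp: Peak_def)

lemma DesB_snoc:
  "DesB (w @ [y]) = DesB w \<union> (if y < pos w (length w) then {length w} else {})"
  by (auto simp: DesB_def pos_snoc pos_snoc_last less_Suc_eq)

lemma DesB_snoc_eq:
  "DesB (w @ [y]) = J \<longleftrightarrow>
     DesB w = J - {length w} \<and> (length w \<in> J \<longleftrightarrow> y < pos w (length w))"
  using DesB_subset[of w] unfolding DesB_snoc by auto

lemma last_negative_snoc: "last_negative (w @ [y]) \<longleftrightarrow> y < 0"
  by (simp add: last_negative_def pos_def)

lemma Peak_snoc:
  "Peak (v @ [x]) = Peak v \<union>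
     (if pos v (length v - 1) < pos v (length v) \<and> x < pos v (length v)
      then {length v} else {})"
  by (cases "v = []") (auto simp: Peak_def pos_snoc pos_snoc_last less_Suc_eq Suc_le_eq)

lemma ends_in_descent_snoc: "ends_in_descent (v @ [x]) \<longleftrightarrow> x < pos v (length v)"
  by (simp add: ends_in_descent_def pos_snoc pos_snoc_last)

lemma pos_positive: "\<forall>y\<in>set v. 0 < y \<Longrightarrow> 0 < i \<Longrightarrow> i \<le> length v \<Longrightarrow> 0 < pos v i"
  by (simp add: pos_def)

lemma pos_distinct:
  "distinct v \<Longrightarrow> 0 < i \<Longrightarrow> i < j \<Longrightarrow> j \<le> length v \<Longrightarrow> pos v i \<noteq> pos v j"
  by (simp add: pos_def nth_eq_iff_index_eq)

lemma Peak_snoc_positive: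
  assumes "\<forall>y\<in>set (v @ [x]). 0 < y" "distinct (v @ [x])"
  shows "Peak (v @ [x]) = Peak v \<union>
    (if \<not> ends_in_descent v \<and> x < pos v (length v) then {length v} else {})"
proof -
  let ?k = "length v"
  have "pos v (?k - 1) \<noteq> pos v ?k" if "x < pos v ?k"
  proof -
    have "0 < pos v ?k"
      using that assms(1) by auto
    then have "0 < ?k"
      by (auto simp: pos_def)
    then show ?thesis
      using \<open>0 < pos v ?k\<close> assms(2) pos_distinct[of v "?k - 1" ?k]
      by (cases "?k = 1") (auto simp: pos_def)
  qed
  then show ?thesis
    unfolding Peak_snoc ends_in_descent_def by auto
qed

lemma peak_compatible_snoc:
  "peak_compatible (v @ [x]) J \<longleftrightarrow>
     peak_compatible v (J - {length v}) \<and>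
     (length v \<in> Peak (v @ [x]) \<longrightarrow> length v \<in> shift_symdiff J)"
proof -
  let ?k = "length v"
  have "i \<in> shift_symdiff J \<longleftrightarrow> i \<in> shift_symdiff (J - {?k})" if "i \<in> Peak v" for i
  proof -
    have "0 < i" "i < ?k"
      using that Peak_subset[of v] by auto
    then show ?thesis
      by (auto simp: mem_shift_symdiff)
  qed
  moreover have "Peak (v @ [x]) = Peak v \<union> (Peak (v @ [x]) \<inter> {?k})"
    by (auto simp: Peak_snoc)
  moreover have "J \<subseteq> {..<length (v @ [x])} \<longleftrightarrow> J - {?k} \<subseteq> {..<?k}"
    by auto
  ultimately show ?thesis
    unfolding peak_compatible_def by blast
qed

lemma signings_snoc:
  "signings (v @ [x]) = (\<lambda>(w, y). w @ [y]) ` (signings v \<times> {y. \<bar>y\<bar> = x})"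
proof
  show "signings (v @ [x]) \<subseteq> (\<lambda>(w, y). w @ [y]) ` (signings v \<times> {y. \<bar>y\<bar> = x})"
  proof
    fix w assume "w \<in> signings (v @ [x])"
    then have "map abs w = v @ [x]" by (simp add: signings_def)
    then obtain w' y where "w = w' @ [y]" "map abs w' = v" "\<bar>y\<bar> = x"
      by (cases w rule: rev_cases) auto
    then show "w \<in> (\<lambda>(w, y). w @ [y]) ` (signings v \<times> {y. \<bar>y\<bar> = x})"
      by (auto simp: signings_def)
  qed
qed (auto simp: signings_def)

lemma sum_signings_snoc:
  assumes "0 < x"
  shows "(\<Sum>w\<in>signings (v @ [x]). f w) = (\<Sum>w\<in>signings v. f (w @ [x]) + f (w @ [- x]))"
proof -
  have inj: "inj_on (\<lambda>(w, y). w @ [y]) (signings v \<times> {y. \<bar>y\<bar> = x})"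
    by (auto simp: inj_on_def)
  have "(\<Sum>w\<in>signings (v @ [x]). f w) = (\<Sum>(w, y)\<in>signings v \<times> {y. \<bar>y\<bar> = x}. f (w @ [y]))"
    unfolding signings_snoc by (subst sum.reindex[OF inj]) (simp add: case_prod_unfold)
  also have "\<dots> = (\<Sum>w\<in>signings v. \<Sum>y\<in>{y. \<bar>y\<bar> = x}. f (w @ [y]))"
    by (rule sum.cartesian_product[symmetric])
  also have "{y. \<bar>y\<bar> = x} = {x, - x}"
    using assms by auto
  finally show ?thesis
    using assms by simp
qed

lemma pos_last_signing:
  "w \<in> signings v \<Longrightarrow> pos w (length w) = signed (last_negative w) (pos v (length v))"
  by (auto simp: signings_def signed_def last_negative_def pos_def)

lemma des_count_snoc:
  assumes "0 < x"
  shows "des_count (v @ [x]) J b =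
    (if length v \<in> J \<longleftrightarrow> signed b x < pos v (length v)
     then des_count v (J - {length v}) False else 0) +
    (if length v \<in> J \<longleftrightarrow> signed b x < - pos v (length v)
     then des_count v (J - {length v}) True else 0)"
proof -
  let ?k = "length v" and ?a = "pos v (length v)" and ?J = "J - {length v}"
  let ?ind = "\<lambda>w J b. if DesB w = J \<and> last_negative w = b then 1 else (0::rat)"
  have per_signing: "?ind (w @ [x]) J b + ?ind (w @ [- x]) J b =
      (if ?k \<in> J \<longleftrightarrow> signed b x < ?a then ?ind w ?J False else 0) +
      (if ?k \<in> J \<longleftrightarrow> signed b x < - ?a then ?ind w ?J True else 0)"
    if "w \<in> signings v" for w
  proof -
    have "length w = ?k" "pos w ?k = signed (last_negative w) ?a"
      using that pos_last_signing[OF that] by (auto simp: signings_def)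
    then show ?thesis
      using assms
      by (cases b; cases "last_negative w") (simp_all add: DesB_snoc_eq last_negative_snoc signed_def)
  qed
  have "des_count (v @ [x]) J b = (\<Sum>w\<in>signings v.
      (if ?k \<in> J \<longleftrightarrow> signed b x < ?a then ?ind w ?J False else 0) +
      (if ?k \<in> J \<longleftrightarrow> signed b x < - ?a then ?ind w ?J True else 0))"
    unfolding des_count_def sum_signings_snoc[OF assms] by (rule sum.cong) (simp_all add: per_signing)
  then show ?thesis
    by (simp add: sum.distrib des_count_def)
qed

lemma des_count_snoc_less:
  assumes "0 < x" "x < pos v (length v)"
  shows "des_count (v @ [x]) J b = des_count v (J - {length v}) (length v \<notin> J)"
  using assms des_count_snoc[OF assms(1), of v J b] by (cases b) (auto simp: signed_def)

lemma des_count_snoc_greater: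
  assumes "0 < x" "\<bar>pos v (length v)\<bar> < x"
  shows "des_count (v @ [x]) J b =
    (if b \<longleftrightarrow> length v \<in> J
     then des_count v (J - {length v}) False + des_count v (J - {length v}) True else 0)"
  using assms des_count_snoc[OF assms(1), of v J b] by (cases b) (auto simp: signed_def)

text \<open>If v ends in a descent, the sign of its last letter is not forced by any gap and
  both signs occur equally often; otherwise it is negative exactly when the last gap
  length v - 1 is a descent. (For v = [] the test reads 0 \<in> J, which is harmless since
  compatibility then forces J = {}.)\<close>
lemma des_count_closed:
  assumes "\<forall>y\<in>set v. 0 < y" "distinct v"
  shows "des_count v J b =
    (if peak_compatible v J
     then 2 ^ card (Peak v) *
       (if ends_in_descent v then 1 / 2 else if b = (length v - 1 \<in> J) then 1 else 0)
     else 0)"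
  using assms
proof (induction v arbitrary: J b rule: rev_induct)
  case Nil
  have "signings [] = {[]}"
    by (auto simp: signings_def)
  then show ?case
    by (auto simp: des_count_def peak_compatible_def Peak_def ends_in_descent_def
        DesB_def last_negative_def pos_def)
next
  case (snoc x v)
  let ?k = "length v" and ?a = "pos v (length v)" and ?J = "J - {length v}"
  have x: "0 < x" and prems: "\<forall>y\<in>set (v @ [x]). 0 < y" "distinct (v @ [x])"
    using snoc.prems by auto
  have IH: "des_count v ?J b' =
      (if peak_compatible v ?J then 2 ^ card (Peak v) *
        (if ends_in_descent v then 1 / 2 else if b' = (?k - 1 \<in> ?J) then 1 else 0) else 0)"
    for b'
    using snoc by auto
  have length_notin_Peak: "?k \<notin> Peak v"
    using Peak_subset[of v] by auto
  have "?a \<in> insert 0 (set v)"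
    by (simp add: pos_length)
  then have "?a \<noteq> x" "0 \<le> ?a"
    using snoc.prems by auto
  then consider (less) "x < ?a" | (greater) "\<bar>?a\<bar> < x"
    by linarith
  then show ?case
  proof cases
    case less
    then obtain m where k: "?k = Suc m"
      using x by (cases ?k) (auto simp: pos_def)
    have rec: "des_count (v @ [x]) J b = des_count v ?J (?k \<notin> J)"
      using x less by (rule des_count_snoc_less)
    have "ends_in_descent (v @ [x])"
      using less by (simp add: ends_in_descent_snoc)
    show ?thesis
    proof (cases "ends_in_descent v")
      case True
      then have "Peak (v @ [x]) = Peak v"
        using prems by (simp add: Peak_snoc_positive)
      then show ?thesis
        using True length_notin_Peak \<open>ends_in_descent (v @ [x])\<close>
        by (simp add: rec IH peak_compatible_snoc)
    next
      case False
      then have peaks: "Peak (v @ [x]) = insert ?k (Peak v)"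
        using prems less by (simp add: Peak_snoc_positive)
      have "card (Peak (v @ [x])) = Suc (card (Peak v))"
        using length_notin_Peak finite_subset[OF Peak_subset] by (simp add: peaks)
      moreover have "peak_compatible (v @ [x]) J \<longleftrightarrow>
          peak_compatible v ?J \<and> (?k \<in> J \<longleftrightarrow> m \<notin> J)"
        by (auto simp: peak_compatible_snoc peaks mem_shift_symdiff k)
      moreover have last_gap: "?k - 1 \<in> ?J \<longleftrightarrow> m \<in> J"
        using k by auto
      ultimately show ?thesis
        using False \<open>ends_in_descent (v @ [x])\<close> by (simp add: rec IH[unfolded last_gap])
    qed
  next
    case greater
    have "des_count (v @ [x]) J b =
        (if b \<longleftrightarrow> ?k \<in> J then (if peak_compatible v ?J then 2 ^ card (Peak v) else 0) else 0)"
      using des_count_snoc_greater[OF x greater] by (simp add: IH)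
    moreover have "Peak (v @ [x]) = Peak v"
      using prems greater by (simp add: Peak_snoc_positive abs_less_iff)
    ultimately show ?thesis
      using greater length_notin_Peak by (simp add: peak_compatible_snoc ends_in_descent_snoc abs_less_iff)
  qed
qed

corollary des_count_both_signs:
  assumes "\<forall>y\<in>set v. 0 < y" "distinct v"
  shows "des_count v J False + des_count v J True =
    (if peak_compatible v J then 2 ^ card (Peak v) else 0)"
  using assms by (simp add: des_count_closed)

lemma Sn_positive: "u \<in> Sn n \<Longrightarrow> \<forall>y\<in>set u. 0 < y"
  by (auto simp: Sn_def)

lemma Sn_distinct: "u \<in> Sn n \<Longrightarrow> distinct u"
  by (simp add: Sn_def)

lemma phi_outside_Sn: "u \<notin> Sn n \<Longrightarrow> phi n f u = 0"
proof -
  assume "u \<notin> Sn n"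
  then have "{w \<in> Bn n. map abs w = u} = {}"
    by (auto simp: Bn_def Sn_def)
  then show ?thesis
    unfolding phi_def by (simp only: sum.empty)
qed

lemma phi_YB:
  assumes u: "u \<in> Sn n" and J: "J \<subseteq> {0..<n}"
  shows "phi n (YB n J) u = (if Peak u \<subseteq> shift_symdiff J then 2 ^ card (Peak u) else 0)"
proof -
  have "{w \<in> Bn n. map abs w = u} = signings u"
    using u by (auto simp: Bn_def Sn_def signings_def)
  then have "phi n (YB n J) u = (\<Sum>w\<in>signings u. if DesB w = J then 1 else 0)"
    unfolding phi_def by (intro sum.cong) (auto simp: YB_def)
  also have "\<dots> = des_count u J False + des_count u J True"
    unfolding des_count_def sum.distrib[symmetric] by (rule sum.cong) auto
  also have "\<dots> = (if peak_compatible u J then 2 ^ card (Peak u) else 0)"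
    using u by (simp add: des_count_both_signs Sn_positive Sn_distinct)
  also have "peak_compatible u J \<longleftrightarrow> Peak u \<subseteq> shift_symdiff J"
    using u J by (auto simp: peak_compatible_def Sn_def)
  finally show ?thesis .
qed

lemma sum_PF_eq:
  "(\<Sum>F\<in>{F \<in> Fn n. F \<subseteq> S}. 2 ^ card F * PF n F u) =
   (if u \<in> Sn n \<and> Peak u \<subseteq> S then 2 ^ card (Peak u) else (0::rat))"
proof -
  have "finite {F \<in> Fn n. F \<subseteq> S}"
    by (rule finite_subset[of _ "Pow {1..<n}"]) (auto simp: Fn_def)
  moreover have "u \<in> Sn n \<Longrightarrow> Peak u \<in> Fn n"
    by (auto simp: Fn_def Peak_def Sn_def)
  moreover have "(\<Sum>F\<in>{F \<in> Fn n. F \<subseteq> S}. 2 ^ card F * PF n F u) =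
      (\<Sum>F\<in>{F \<in> Fn n. F \<subseteq> S}. if Peak u = F then (if u \<in> Sn n then 2 ^ card F else 0) else 0)"
    by (intro sum.cong) (auto simp: PF_def)
  ultimately show ?thesis
    by (simp add: sum.delta)
qed

lemma Peak_eq_DesA:
  assumes "u \<in> Sn n"
  shows "Peak u = {i \<in> DesA u. i - 1 \<notin> DesA u}"
proof (rule set_eqI)
  fix i
  have "pos u (i - 1) < pos u i \<longleftrightarrow> \<not> (1 \<le> i - 1 \<and> pos u (i - 1) > pos u i)"
    if "1 \<le> i" "i < length u"
  proof (cases "i = 1")
    case True
    then show ?thesis
      using that pos_positive[OF Sn_positive[OF assms], of i] by (simp add: pos_def)
  next
    case False
    then show ?thesis
      using that pos_distinct[OF Sn_distinct[OF assms], of "i - 1" i] by auto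
  qed
  then show "i \<in> Peak u \<longleftrightarrow> i \<in> {i \<in> DesA u. i - 1 \<notin> DesA u}"
    by (auto simp: Peak_def DesA_def)
qed

lemma phi_sum:
  "phi n (\<lambda>w. \<Sum>J\<in>A. c J * g J w) u = (\<Sum>J\<in>A. c J * phi n (g J) u)"
  unfolding phi_def by (simp add: sum.swap[of _ A] sum_distrib_left)

lemma SigmaA_memI:
  assumes "\<And>u. u \<in> Sn n \<Longrightarrow> h u = d (DesA u)" "\<And>u. u \<notin> Sn n \<Longrightarrow> h u = 0"
  shows "h \<in> SigmaA n"
proof -
  have "h u = (\<Sum>K\<in>Pow {1..<n}. d K * YA n K u)" for u
  proof (cases "u \<in> Sn n")
    case True
    then have "DesA u \<in> Pow {1..<n}"
      by (auto simp: DesA_def Sn_def)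
    moreover have "(\<Sum>K\<in>Pow {1..<n}. d K * YA n K u) =
        (\<Sum>K\<in>Pow {1..<n}. if K = DesA u then d K else 0)"
      using True by (intro sum.cong) (auto simp: YA_def)
    ultimately show ?thesis
      using True assms(1) by (simp add: sum.delta')
  next
    case False
    then show ?thesis
      using assms(2) by (simp add: YA_def)
  qed
  then show ?thesis
    unfolding SigmaA_def by blast
qed

theorem proposition3p2:
  fixes n :: nat
  shows "(\<forall>f\<in>SigmaB n. phi n f \<in> SigmaA n) \<and>
    (\<forall>J. J \<subseteq> {0..<n} \<longrightarrow>
       phi n (YB n J) =
       (\<lambda>u. \<Sum>F\<in>{F \<in> Fn n. F \<subseteq> (J \<union> Suc ` J) - (J \<inter> Suc ` J)}.
               2 ^ card F * PF n F u))"
proof (intro conjI ballI allI impI)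
  fix f assume "f \<in> SigmaB n"
  then obtain c where f: "f = (\<lambda>w. \<Sum>J\<in>Pow {0..<n}. c J * YB n J w)"
    by (auto simp: SigmaB_def)
  let ?peaks = "\<lambda>K. {i \<in> K. i - 1 \<notin> K}"
  show "phi n f \<in> SigmaA n"
  proof (rule SigmaA_memI)
    show "phi n f u = (\<Sum>J\<in>Pow {0..<n}. c J *
        (if ?peaks (DesA u) \<subseteq> shift_symdiff J then 2 ^ card (?peaks (DesA u)) else 0))"
      if "u \<in> Sn n" for u
      using that unfolding Peak_eq_DesA[OF that, symmetric] by (simp add: f phi_sum phi_YB)
  qed (rule phi_outside_Sn)
next
  fix J :: "nat set" assume J: "J \<subseteq> {0..<n}"
  show "phi n (YB n J) =
      (\<lambda>u. \<Sum>F\<in>{F \<in> Fn n. F \<subseteq> (J \<union> Suc ` J) - (J \<inter> Suc ` J)}. 2 ^ card F * PF n F u)"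
  proof
    fix u
    show "phi n (YB n J) u =
        (\<Sum>F\<in>{F \<in> Fn n. F \<subseteq> (J \<union> Suc ` J) - (J \<inter> Suc ` J)}. 2 ^ card F * PF n F u)"
      using J unfolding shift_symdiff_def[symmetric]
      by (cases "u \<in> Sn n") (simp_all add: sum_PF_eq phi_YB phi_outside_Sn)
  qed
qed

end
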